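(* Let $V: \mathbb{R}^n\times \mathbb{R}^{p, N_p} \to \mathbb{R}$ be a generalized discrete-time control Lyapunov function (g-dclf) of order $m$ for the system $x^{k+1}=f(x^k,u^k)$. Suppose that the terminal-feedback assumption below is satisfied and that the finite-horizon optimal control problem below with $x=x(k_0)$ is feasible. Then the flexible-step MPC scheme given below is recursively feasible, i.e. the optimal control problem remains feasible at every subsequent iteration of the scheme.
   Context: Consider the discrete-time control system $x^{k+1}=f(x^k,u^k)$, $k\in\mathbb{N}$, with $x^k\in X\subseteq\mathbb{R}^n$, $u^k\in U\subseteq\mathbb{R}^p$, $0\in\operatorname{int}X$, $0\in\operatorname{int}U$, $f:X\times U\to\mathbb{R}^n$ continuous and $f(0,0)=0$. For $x\in X$, $\mathbf{U}_{[0:q-1]}(x)$ denotes the set of control sequences $\mathbf{u}_{[0:q-1]}=[u_0,\dots,u_{q-1}]\in\mathbb{R}^{p,q}$ such that, with $x^0=x$, $u_j\in U$ and $x^{j+1}=f(x^j,u_j)\in X$ for $j=0,\dots,q-1$ (in the proof the terminal constraint $x^{N_p}\in X^{N_p}$ is added to $\mathbf{U}_{[0:N_p-1]}$). g-dclf of order $m$ ($m\ge1$, $q\in\mathbb{N}$): a continuous, positive definite $V:\mathbb{R}^n\times\mathbb{R}^{p,q}\to\mathbb{R}$ for which there is a continuous, radially unbounded, positive definite $\alpha$ with $V(x^0,\mathbf{u}_{[0:q-1]})\ge\alpha(x^0,\mathbf{u}_{[0:q-1]})$ for all $x^0$, $\mathbf{u}_{[0:q-1]}\in\mathbf{U}_{[0:q-1]}(x^0)$,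 and such that for every such pair there is $\boldsymbol{\nu}_{[0:q+m-1]}$ with $\boldsymbol{\nu}_{[l:q+l-1]}\in\mathbf{U}_{[0:q-1]}(x^l)$ for $l=0,\dots,m$ (where $x^l$ are the states generated from $x^0$ by $\boldsymbol\nu$) satisfying the average decrease condition (adc) $\frac{1}{m}\sum_{i=1}^m\sigma_iV(x^i,\boldsymbol{\nu}_{[i:q+i-1]})-V(x^0,\mathbf{u}_{[0:q-1]})\le-\alpha(x^0,\mathbf{u}_{[0:q-1]})$, with weights $\sigma_i\ge0$ and $\frac{\sigma_1+\dots+\sigma_m}{m}-1\ge0$. Optimal control problem (with $q\le N_p$, $1\le m\le N_p$, $N=\max\{q+m,N_p\}$): given current state $x$ and the previous control strategy $\mathbf{u}^{*-}_{[0:q-1]}$, minimize $\sum_{j=0}^{N_p-1}f_0(x^j,u^j)+\phi(x^{N_p})$ over $u^0,\dots,u^{N-1}$ subject to $x^{j+1}=f(x^j,u^j)$, $x^0=x$, $u^j\in U$, $x^j\in X$, $x^{N_p}\in X^{N_p}$, $[u^l,\dots,u^{l+q-1}]\in\mathbf{U}_{[0:q-1]}(x^l)$ for $l=0,\dots,m$, and the adc constraint $\frac1m\sum_{i=1}^m\sigma_iV(x^i,[u^i,\dots,u^{i+q-1}])-V(x^0,\mathbf{u}^{*-}_{[0:q-1]})\le-\alpha(x^0,\mathbf{u}^{*-}_{[0:q-1]})$. Here $f_0$ is positive definite, $\phi$ positive semi-definite, $0\in\operatorname{int}X^{N_p}$, $X^{N_p}\subseteq X$, and $V$ is a g-dclf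 of order $m$. Flexible-step MPC scheme: set $k=k_0$, choose arbitrary $\mathbf{u}^{*-}_{[0:q-1]}\in\mathbf{U}_{[0:q-1]}(x(k_0))$; measure $x(k)$; solve the optimal control problem with $x=x(k)$ to obtain $\mathbf{u}^*_{[0:N-1]}$ with predicted states $x^{*j}$; choose an index $1\le\ell_{decr}\le m$ with $V(x^{*\ell_{decr}},\mathbf{u}^*_{[\ell_{decr}:q+\ell_{decr}-1]})-V(x,\mathbf{u}^{*-}_{[0:q-1]})\le-\alpha(x,\mathbf{u}^{*-}_{[0:q-1]})$; implement $\mathbf{u}^*_{[0:\ell_{decr}-1]}$ and set $\mathbf{u}^{*-}_{[0:q-1]}:=\mathbf{u}^*_{[\ell_{decr}:q+\ell_{decr}-1]}$; set $k:=k+\ell_{decr}$ and repeat. Terminal-feedback assumption (with $q=N_p$): $V:\mathbb{R}^n\times\mathbb{R}^{p,N_p}\to\mathbb{R}$ is a g-dclf of order $m$, and for any $(x^0,\mathbf{u}_{[0:N_p-1]})\in X\times\mathbf{U}_{[0:N_p-1]}(x^0)$ there exists a feedback $\mathbf{c}:X^{N_p}\to\mathbb{R}^{p,m}$ such that for all $\tilde x\in X^{N_p}$: (1) $c_0(\tilde x),\dots,c_{m-1}(\tilde x)\in U$; (2) with $x^0=\tilde x$, $x^{j+1}=f(x^j,c_j(\tilde x))\in X^{N_p}$ for $j=0,\dots,m-1$; (3) the sequence $[\mathbf{u}_{[0:N_p-1]},\mathbf{c}(\tilde x)]$ steers $x^0$ to $x^m$ such that $\frac1m\big(\sigma_mV(x^m,[\mathbf{u}_{[m:N_p-1]},\mathbf{c}(\tilde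 x)])+\dots+\sigma_1V(x^1,[\mathbf{u}_{[1:N_p-1]},c_0(\tilde x)])\big)-V(x^0,\mathbf{u}_{[0:N_p-1]})\le-\alpha(x^0,\mathbf{u}_{[0:N_p-1]})$. *)

theory Defs
  imports "HOL-Analysis.Analysis"
begin

text \<open>Control sequences in R^{p,q} are represented as lists of controls of length q.\<close>

fun traj :: "('x \<Rightarrow> 'u \<Rightarrow> 'x) \<Rightarrow> 'x \<Rightarrow> 'u list \<Rightarrow> nat \<Rightarrow> 'x" where
  "traj f x us 0 = x"
| "traj f x us (Suc j) = f (traj f x us j) (us ! j)"

definition win :: "'u list \<Rightarrow> nat \<Rightarrow> nat \<Rightarrow> 'u list" where
  "win ws l q = take q (drop l ws)"

text \<open>Admissible control sequences U_[0:q-1](x), with terminal constraint x^q in T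
  (T = X^{N_p} when q = N_p, as in the paper's proof).\<close>
definition adm :: "('x \<Rightarrow> 'u \<Rightarrow> 'x) \<Rightarrow> 'x set \<Rightarrow> 'u set \<Rightarrow> 'x set \<Rightarrow> nat \<Rightarrow> 'x \<Rightarrow> 'u list \<Rightarrow> bool" where
  "adm f X U T q x us \<longleftrightarrow> length us = q \<and>
     (\<forall>j<q. us ! j \<in> U \<and> traj f x us (Suc j) \<in> X) \<and> traj f x us q \<in> T"

definition cont_q :: "nat \<Rightarrow> ('x::euclidean_space \<Rightarrow> 'u::euclidean_space list \<Rightarrow> real) \<Rightarrow> bool" where
  "cont_q q W \<longleftrightarrow> (\<forall>x us xs uss. length us = q \<and> (\<forall>k. length (uss k) = q) \<and>
      xs \<longlonglongrightarrow> x \<and> (\<forall>j<q. (\<lambda>k. uss k ! j) \<longlonglongrightarrow> us ! j)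
      \<longrightarrow> (\<lambda>k. W (xs k) (uss k)) \<longlonglongrightarrow> W x us)"

definition posdef_q :: "nat \<Rightarrow> ('x::euclidean_space \<Rightarrow> 'u::euclidean_space list \<Rightarrow> real) \<Rightarrow> bool" where
  "posdef_q q W \<longleftrightarrow> W 0 (replicate q 0) = 0 \<and>
     (\<forall>x us. length us = q \<and> (x, us) \<noteq> (0, replicate q 0) \<longrightarrow> W x us > 0)"

definition rad_unbounded_q :: "nat \<Rightarrow> ('x::euclidean_space \<Rightarrow> 'u::euclidean_space list \<Rightarrow> real) \<Rightarrow> bool" where
  "rad_unbounded_q q W \<longleftrightarrow> (\<forall>M. \<exists>R. \<forall>x us. length us = q \<and>
      norm x + (\<Sum>j<q. norm (us ! j)) \<ge> R \<longrightarrow> W x us \<ge> M)"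

definition adc :: "('x \<Rightarrow> 'u \<Rightarrow> 'x) \<Rightarrow> nat \<Rightarrow> nat \<Rightarrow> (nat \<Rightarrow> real) \<Rightarrow>
    ('x \<Rightarrow> 'u list \<Rightarrow> real) \<Rightarrow> ('x \<Rightarrow> 'u list \<Rightarrow> real) \<Rightarrow> 'x \<Rightarrow> 'u list \<Rightarrow> 'u list \<Rightarrow> bool" where
  "adc f q m \<sigma> V \<alpha> x0 uprev nu \<longleftrightarrow>
     (1 / real m) * (\<Sum>i=1..m. \<sigma> i * V (traj f x0 nu i) (win nu i q)) - V x0 uprev \<le> - \<alpha> x0 uprev"

definition gdclf :: "('x::euclidean_space \<Rightarrow> 'u::euclidean_space \<Rightarrow> 'x) \<Rightarrow> 'x set \<Rightarrow> 'u set \<Rightarrow> 'x set \<Rightarrow>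
    nat \<Rightarrow> nat \<Rightarrow> (nat \<Rightarrow> real) \<Rightarrow> ('x \<Rightarrow> 'u list \<Rightarrow> real) \<Rightarrow> ('x \<Rightarrow> 'u list \<Rightarrow> real) \<Rightarrow> bool" where
  "gdclf f X U T q m \<sigma> V \<alpha> \<longleftrightarrow>
     m \<ge> 1 \<and> cont_q q V \<and> posdef_q q V \<and>
     cont_q q \<alpha> \<and> posdef_q q \<alpha> \<and> rad_unbounded_q q \<alpha> \<and>
     (\<forall>i\<in>{1..m}. \<sigma> i \<ge> 0) \<and> (\<Sum>i=1..m. \<sigma> i) / real m - 1 \<ge> 0 \<and>
     (\<forall>x0\<in>X. \<forall>us. adm f X U T q x0 us \<longrightarrow>
        V x0 us \<ge> \<alpha> x0 us \<and>
        (\<exists>nu. length nu = q + m \<and>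
           (\<forall>l\<le>m. adm f X U T q (traj f x0 nu l) (win nu l q)) \<and>
           adc f q m \<sigma> V \<alpha> x0 us nu))"

definition ocp_feasible :: "('x \<Rightarrow> 'u \<Rightarrow> 'x) \<Rightarrow> 'x set \<Rightarrow> 'u set \<Rightarrow> 'x set \<Rightarrow> nat \<Rightarrow> nat \<Rightarrow> nat \<Rightarrow>
    (nat \<Rightarrow> real) \<Rightarrow> ('x \<Rightarrow> 'u list \<Rightarrow> real) \<Rightarrow> ('x \<Rightarrow> 'u list \<Rightarrow> real) \<Rightarrow> 'x \<Rightarrow> 'u list \<Rightarrow> 'u list \<Rightarrow> bool" where
  "ocp_feasible f X U XNp Np q m \<sigma> V \<alpha> x uprev ws \<longleftrightarrow>
     length ws = max (q + m) Np \<and>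
     (\<forall>j<max (q + m) Np. ws ! j \<in> U) \<and>
     (\<forall>j\<le>max (q + m) Np. traj f x ws j \<in> X) \<and>
     traj f x ws Np \<in> XNp \<and>
     (\<forall>l\<le>m. adm f X U XNp q (traj f x ws l) (win ws l q)) \<and>
     adc f q m \<sigma> V \<alpha> x uprev ws"

definition ocp_cost :: "('x \<Rightarrow> 'u \<Rightarrow> 'x) \<Rightarrow> nat \<Rightarrow> ('x \<Rightarrow> 'u \<Rightarrow> real) \<Rightarrow> ('x \<Rightarrow> real) \<Rightarrow> 'x \<Rightarrow> 'u list \<Rightarrow> real" where
  "ocp_cost f Np f0 \<phi> x ws = (\<Sum>j<Np. f0 (traj f x ws j) (ws ! j)) + \<phi> (traj f x ws Np)"

definition ocp_optimal where
  "ocp_optimal f X U XNp Np q m \<sigma> V \<alpha> f0 \<phi> x uprev ws \<longleftrightarrow>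
     ocp_feasible f X U XNp Np q m \<sigma> V \<alpha> x uprev ws \<and>
     (\<forall>ws'. ocp_feasible f X U XNp Np q m \<sigma> V \<alpha> x uprev ws' \<longrightarrow>
        ocp_cost f Np f0 \<phi> x ws \<le> ocp_cost f Np f0 \<phi> x ws')"

text \<open>One iteration of the flexible-step MPC scheme: from (current state, previous strategy)
  to (next measured state, new previous strategy), using an optimal solution and an
  admissible step length l_decr.\<close>
definition mpc_step where
  "mpc_step f X U XNp Np q m \<sigma> V \<alpha> f0 \<phi> s s' \<longleftrightarrow>
     (\<exists>ws l. ocp_optimal f X U XNp Np q m \<sigma> V \<alpha> f0 \<phi> (fst s) (snd s) ws \<and>
        1 \<le> l \<and> l \<le> m \<and>
        V (traj f (fst s) ws l) (win ws l q) - V (fst s) (snd s) \<le> - \<alpha> (fst s) (snd s) \<and>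
        s' = (traj f (fst s) ws l, win ws l q))"

end

theory Submission
  imports Defs
begin

text \<open>Recursive feasibility follows from the usual shifted-candidate argument. After an
  iteration the new previous strategy is a window of the last solution, hence admissible from
  the new state, and in particular it ends in \<open>X\<^sup>N\<^sup>p\<close>. Appending the \<open>m\<close> controls of the
  terminal feedback at that end point yields a sequence of length \<open>N\<^sub>p + m\<close> that stays in
  \<open>X\<^sup>N\<^sup>p\<close> from time \<open>N\<^sub>p\<close> on, so every window of length \<open>N\<^sub>p\<close> starting at a time \<open>l \<le> m\<close> is
  admissible, and its average decrease condition is exactly condition (3) of the assumption.\<close>

lemma traj_cong: "(\<And>j. j < i \<Longrightarrow> us ! j = vs ! j) \<Longrightarrow> traj f x us i = traj f x vs i"
  by (induction i) auto

lemma traj_append_left: "j \<le> length us \<Longrightarrow> traj f x (us @ vs) j = traj f x us j"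
  by (rule traj_cong) (simp add: nth_append)

lemma traj_append_right:
  "traj f x (us @ vs) (length us + j) = traj f (traj f x us (length us)) vs j"
  by (induction j) (auto simp: nth_append traj_append_left)

lemma traj_win:
  "i \<le> q \<Longrightarrow> l \<le> length ws \<Longrightarrow> traj f (traj f x ws l) (win ws l q) i = traj f x ws (l + i)"
  by (induction i) (auto simp: win_def)

lemma adm_win:
  assumes "l + q \<le> length ws"
    and "\<And>j. l \<le> j \<Longrightarrow> j < l + q \<Longrightarrow> ws ! j \<in> U"
    and "\<And>j. l < j \<Longrightarrow> j \<le> l + q \<Longrightarrow> traj f x ws j \<in> X"
    and "traj f x ws (l + q) \<in> T"
  shows "adm f X U T q (traj f x ws l) (win ws l q)"
  unfolding adm_def
proof (intro conjI allI impI)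
  show "length (win ws l q) = q"
    using assms(1) by (simp add: win_def)
  show "win ws l q ! j \<in> U" if "j < q" for j
    using assms(1,2) that by (simp add: win_def)
  show "traj f (traj f x ws l) (win ws l q) (Suc j) \<in> X" if "j < q" for j
    using assms(1,3) that by (simp del: traj.simps add: traj_win)
  show "traj f (traj f x ws l) (win ws l q) q \<in> T"
    using assms(1,4) by (simp add: traj_win)
qed

lemma mpc_step_admissible:
  assumes "mpc_step f X U T Np q m \<sigma> V \<alpha> f0 \<phi> s s'"
  shows "fst s' \<in> X \<and> adm f X U T q (fst s') (snd s')"
proof -
  obtain ws l where "ocp_feasible f X U T Np q m \<sigma> V \<alpha> (fst s) (snd s) ws"
    and "l \<le> m" and "s' = (traj f (fst s) ws l, win ws l q)"
    using assms unfolding mpc_step_def ocp_optimal_def by blast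
  then show ?thesis unfolding ocp_feasible_def by auto
qed

lemma ocp_feasible_append_terminal:
  assumes x: "x \<in> X" and up: "adm f X U T Np x up" and T: "T \<subseteq> X"
    and c: "length c = m" "\<forall>j<m. c ! j \<in> U" "\<forall>j<m. traj f (traj f x up Np) c (Suc j) \<in> T"
    and decrease: "adc f Np m \<sigma> V \<alpha> x up (up @ c)"
  shows "ocp_feasible f X U T Np Np m \<sigma> V \<alpha> x up (up @ c)"
proof -
  let ?ws = "up @ c"
  have len_up: "length up = Np"
    using up by (simp add: adm_def)
  have len: "length ?ws = max (Np + m) Np"
    using len_up c(1) by simp
  have controls: "?ws ! j \<in> U" if "j < Np + m" for j
    using that up c len_up by (auto simp: adm_def nth_append)
  have tail: "traj f x ?ws k \<in> T" if "Np \<le> k" "k \<le> Np + m" for k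
  proof -
    define j where "j = k - Np"
    have "traj f x ?ws k = traj f (traj f x up Np) c j"
      using that traj_append_right[of f x up c j] by (simp add: j_def len_up)
    also have "\<dots> \<in> T"
      using that up c by (cases j) (auto simp: adm_def j_def)
    finally show ?thesis .
  qed
  have states: "traj f x ?ws k \<in> X" if "k \<le> Np + m" for k
  proof (cases "k \<le> Np")
    case True
    then have "traj f x ?ws k = traj f x up k"
      using len_up by (simp add: traj_append_left)
    with True x up show ?thesis
      by (cases k) (auto simp del: traj.simps(2) simp: adm_def)
  next
    case False
    then show ?thesis using that tail T by auto
  qed
  have windows: "adm f X U T Np (traj f x ?ws l) (win ?ws l Np)" if "l \<le> m" for l
  proof (rule adm_win)
    show "l + Np \<le> length ?ws"
      using that len_up c(1) by simp
    show "?ws ! j \<in> U" if "l \<le> j" "j < l + Np" for j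
      using that \<open>l \<le> m\<close> controls by simp
    show "traj f x ?ws j \<in> X" if "l < j" "j \<le> l + Np" for j
      using that \<open>l \<le> m\<close> states by simp
    show "traj f x ?ws (l + Np) \<in> T"
      using \<open>l \<le> m\<close> tail by simp
  qed
  show ?thesis
    unfolding ocp_feasible_def
    using len controls states tail windows decrease by simp
qed

theorem theorem2p11:
  fixes f :: "'x::euclidean_space \<Rightarrow> 'u::euclidean_space \<Rightarrow> 'x"
    and X XNp :: "'x set" and U :: "'u set"
    and Np m :: nat and \<sigma> :: "nat \<Rightarrow> real"
    and V \<alpha> :: "'x \<Rightarrow> 'u list \<Rightarrow> real"
    and f0 :: "'x \<Rightarrow> 'u \<Rightarrow> real" and \<phi> :: "'x \<Rightarrow> real"
    and x0 :: 'x and u0 :: "'u list"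
  assumes sys: "0 \<in> interior X" "0 \<in> interior U"
      "continuous_on (X \<times> U) (\<lambda>(x, u). f x u)" "f 0 0 = 0"
    and f0_pd: "f0 0 0 = 0" "\<forall>x u. (x, u) \<noteq> (0, 0) \<longrightarrow> f0 x u > 0"
    and phi_psd: "\<phi> 0 = 0" "\<forall>x. \<phi> x \<ge> 0"
    and XNp: "0 \<in> interior XNp" "XNp \<subseteq> X"
    and m: "1 \<le> m" "m \<le> Np"
    and V: "gdclf f X U XNp Np m \<sigma> V \<alpha>"
    and term_fb: "\<forall>x\<in>X. \<forall>us. adm f X U XNp Np x us \<longrightarrow>
        (\<exists>c :: 'x \<Rightarrow> 'u list. \<forall>xt\<in>XNp.
           length (c xt) = m \<and>
           (\<forall>j<m. c xt ! j \<in> U) \<and>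
           (\<forall>j<m. traj f xt (c xt) (Suc j) \<in> XNp) \<and>
           adc f Np m \<sigma> V \<alpha> x us (us @ c xt))"
    and init: "x0 \<in> X" "adm f X U XNp Np x0 u0"
    and feas0: "\<exists>ws. ocp_feasible f X U XNp Np Np m \<sigma> V \<alpha> x0 u0 ws"
  shows "\<forall>x up. (mpc_step f X U XNp Np Np m \<sigma> V \<alpha> f0 \<phi>)\<^sup>*\<^sup>* (x0, u0) (x, up) \<longrightarrow>
           (\<exists>ws. ocp_feasible f X U XNp Np Np m \<sigma> V \<alpha> x up ws)"
proof (intro allI impI)
  fix x up
  assume "(mpc_step f X U XNp Np Np m \<sigma> V \<alpha> f0 \<phi>)\<^sup>*\<^sup>* (x0, u0) (x, up)"
  then have "x \<in> X \<and> adm f X U XNp Np x up"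
    by (cases rule: rtranclp.cases) (use init mpc_step_admissible in fastforce)+
  then have x: "x \<in> X" and up: "adm f X U XNp Np x up"
    by auto
  then obtain c where "\<forall>xt\<in>XNp. length (c xt) = m \<and> (\<forall>j<m. c xt ! j \<in> U) \<and>
      (\<forall>j<m. traj f xt (c xt) (Suc j) \<in> XNp) \<and> adc f Np m \<sigma> V \<alpha> x up (up @ c xt)"
    using term_fb by blast
  moreover have "traj f x up Np \<in> XNp"
    using up by (simp add: adm_def)
  ultimately show "\<exists>ws. ocp_feasible f X U XNp Np Np m \<sigma> V \<alpha> x up ws"
    using ocp_feasible_append_terminal[OF x up XNp(2)] by blast
qed

end
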